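(* Let $A$ be a DFA over a finite alphabet $\Sigma$ and let $S=s_1,\ldots,s_l$ be any non-empty sequence of strings $s_i\in\Sigma^*$. For any execution of prefix-free IDS on $S$ (with teacher $A$) there exists an execution of ID on the input set $\{\lambda,s_1,\ldots,s_l\}$ (with teacher $A$) such that for all $m\ge 0$: (i) for all $n\ge0$, if $K(n)=m$ then (a) for all $0\le j\le n$, $v_j^{IDS}=v_j^{ID}$; (b) for all $0\le j<n$, $v_n^{IDS}\neq v_j^{IDS}$; (c) for all $\alpha\in T_m^{IDS}$, $E_n^{IDS}(\alpha)=\{v_j^{IDS}: 0\le j\le n,\ \alpha v_j^{IDS}\in L(A)\}$; (ii) if $m>0$, letting $p$ be the greatest integer with $K(p)=m-1$, then for all $\alpha\in T_m^{IDS}$, $E_p^{IDS}(\alpha)=\{v_j^{IDS}:0\le j\le p,\ \alpha v_j^{IDS}\in L(A)\}$; (iii) the $m$-th partition refinement of IDS (the run of the refinement procedure while $k=m$) terminates.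
   Context: Let $A=\langle\Sigma,Q,F,q_0,\delta\rangle$ be a DFA with finite alphabet $\Sigma$ and language $L(A)$; $\lambda$ is the empty string. Membership queries "is $w\in L(A)$?" are answered correctly. Let $d_0$ be a fresh symbol not in $\Sigma^*$; $f(d_0,b)=d_0$ and $f(\alpha,b)=\alpha b$ for $\alpha\in\Sigma^*$. $U\oplus V=(U-V)\cup(V-U)$. Refinement procedure with respect to a finite set $P'$ (containing $d_0$) and a finite set $T\subseteq\Sigma^*$: while there exist $\alpha,\beta\in P'$ and $b\in\Sigma$ with $E_i(\alpha)=E_i(\beta)$ but $E_i(f(\alpha,b))\neq E_i(f(\beta,b))$: choose (nondeterministically) such $\alpha,\beta,b$ and some $\gamma\in E_i(f(\alpha,b))\oplus E_i(f(\beta,b))$, set $v_{i+1}=b\gamma$, increase $i$ by one, and for each $\alpha'\in T$ set $E_i(\alpha')=E_{i-1}(\alpha')\cup\{v_i\}$ if $\alpha' v_i\in L(A)$, else $E_i(\alpha')=E_{i-1}(\alpha')$. Always $E_i(d_0)=\emptyset$. ID algorithm (input: finite $P\subseteq\Sigma^*$): $P'=P\cup\{d_0\}$, $T=P\cup\{\alpha b:\alpha\in P,b\in\Sigma\}$, $i=0$, $v_0=\lambda$, $E_0(\alpha)=\{\lambda\}$ if $\alpha\in L(A)$ else $\emptyset$ for $\alpha\in T$; then run the refinement procedure w.r.t. $P'$ and $T$ (and then build a hypothesis automaton from the resulting sets). The values of its variables are denoted $v_j^{ID}$, $E_n^{ID}(\alpha)$. Prefix-free IDS algorithm (input: sequence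 $S=s_1,\ldots,s_l$): initialize $i=k=t=0$, $v_0=\lambda$, $P_0=\{\lambda\}$, $T_0=\{\lambda\}\cup\Sigma$, $E_0(\alpha)=\{\lambda\}$ if $\alpha\in L(A)$ else $\emptyset$ for $\alpha\in T_0$; run the refinement procedure w.r.t. $P'_0=P_0\cup\{d_0\}$ and $T_0$ and build hypothesis $M_0$. Then for each string $\alpha$ of $S$ in order: increase $k,t$ by one; $P_k=P_{k-1}\cup\{\alpha\}$, $P'_k=P_k\cup\{d_0\}$, $T_k=T_{k-1}\cup\{\alpha\}\cup\{\alpha b:b\in\Sigma\}$; for each $\beta\in T_k-T_{k-1}$ set $E_i(\beta)=\{v_j:0\le j\le i,\ \beta v_j\in L(A)\}$; run the refinement procedure w.r.t. $P'_k$ and $T_k$ (this is the $k$-th partition refinement); then produce hypothesis $M_t$ (equal to $M_{t-1}$ if $M_{t-1}$ classifies $\alpha$ correctly, otherwise newly constructed from the current sets $E_i$). Values of its variables are denoted $v_j^{IDS}$, $E_n^{IDS}(\alpha)$, $T_m^{IDS}$ (where $E_n^{IDS}(\alpha)$ is the value assigned to $E_i(\alpha)$ while $i=n$). Re-indexing function: $K=K^S:\mathbb N\to\mathbb N$ is the unique monotonically increasing function such that for each $n$, $K(n)$ is the least integer $m$ such that the variable $k$ of IDS has value $m$ while the variable $i$ has value $n$ (so $K(0)=0$). *)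

theory Defs
  imports Main
begin

definition dfa :: "'a set \<Rightarrow> 's set \<Rightarrow> ('s \<Rightarrow> 'a \<Rightarrow> 's) \<Rightarrow> 's \<Rightarrow> 's set \<Rightarrow> bool" where
  "dfa Sig Q delta q0 F \<longleftrightarrow> finite Sig \<and> finite Q \<and> q0 \<in> Q \<and> F \<subseteq> Q \<and>
     (\<forall>q\<in>Q. \<forall>a\<in>Sig. delta q a \<in> Q)"

definition dfa_lang :: "'a set \<Rightarrow> ('s \<Rightarrow> 'a \<Rightarrow> 's) \<Rightarrow> 's \<Rightarrow> 's set \<Rightarrow> 'a list set" where
  "dfa_lang Sig delta q0 F = {w. set w \<subseteq> Sig \<and> foldl delta q0 w \<in> F}"

text \<open>Elements of P' are represented as options: None is the fresh symbol d0,
  Some alpha is the string alpha.\<close>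
fun fext :: "'a list option \<Rightarrow> 'a \<Rightarrow> 'a list option" where
  "fext None b = None"
| "fext (Some al) b = Some (al @ [b])"

fun Eo :: "('a list \<Rightarrow> 'a list set) \<Rightarrow> 'a list option \<Rightarrow> 'a list set" where
  "Eo E None = {}"
| "Eo E (Some al) = E al"

definition Pd :: "'a list set \<Rightarrow> 'a list option set" where
  "Pd P = insert None (Some ` P)"

definition symdiff :: "'b set \<Rightarrow> 'b set \<Rightarrow> 'b set" where
  "symdiff U V = (U - V) \<union> (V - U)"

definition refine_enabled :: "'a set \<Rightarrow> 'a list set \<Rightarrow> ('a list \<Rightarrow> 'a list set) \<Rightarrow> bool" where
  "refine_enabled Sig P E \<longleftrightarrow>
     (\<exists>al\<in>Pd P. \<exists>be\<in>Pd P. \<exists>b\<in>Sig. Eo E al = Eo E be \<and> Eo E (fext al b) \<noteq> Eo E (fext be b))"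

text \<open>One (nondeterministic) iteration of the refinement procedure w.r.t. P' = P + {d0} and T;
  the state is (i, v, E) where v j is v_j and E is the current E_i.\<close>
definition refine_step ::
  "'a set \<Rightarrow> 'a list set \<Rightarrow> 'a list set \<Rightarrow> 'a list set \<Rightarrow>
   nat \<times> (nat \<Rightarrow> 'a list) \<times> ('a list \<Rightarrow> 'a list set) \<Rightarrow>
   nat \<times> (nat \<Rightarrow> 'a list) \<times> ('a list \<Rightarrow> 'a list set) \<Rightarrow> bool" where
  "refine_step Sig L P T st st' \<longleftrightarrow>
    (case st of (i, v, E) \<Rightarrow>
      \<exists>al\<in>Pd P. \<exists>be\<in>Pd P. \<exists>b\<in>Sig. \<exists>ga.
        Eo E al = Eo E be \<and> Eo E (fext al b) \<noteq> Eo E (fext be b) \<and>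
        ga \<in> symdiff (Eo E (fext al b)) (Eo E (fext be b)) \<and>
        st' = (Suc i, v(Suc i := b # ga),
               (\<lambda>x. if x \<in> T \<and> x @ (b # ga) \<in> L then E x \<union> {b # ga} else E x)))"

definition Tset :: "'a set \<Rightarrow> 'a list set \<Rightarrow> 'a list set" where
  "Tset Sig P = P \<union> {al @ [b] | al b. al \<in> P \<and> b \<in> Sig}"

definition E_init :: "'a list set \<Rightarrow> 'a list set \<Rightarrow> 'a list \<Rightarrow> 'a list set" where
  "E_init L T = (\<lambda>al. if al \<in> T \<and> al \<in> L then {[]} else {})"

type_synonym 'a id_cfg = "nat \<times> (nat \<Rightarrow> 'a list) \<times> ('a list \<Rightarrow> 'a list set)"

text \<open>A maximal execution of ID on input P (finite executions are
  extended by stuttering at the final configuration). Building the hypothesis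
  does not change the variables and is omitted.\<close>
definition id_run :: "'a set \<Rightarrow> 'a list set \<Rightarrow> 'a list set \<Rightarrow> (nat \<Rightarrow> 'a id_cfg) \<Rightarrow> bool" where
  "id_run Sig L P d \<longleftrightarrow>
     d 0 = (0, (\<lambda>_. []), E_init L (Tset Sig P)) \<and>
     (\<forall>t. refine_step Sig L P (Tset Sig P) (d t) (d (Suc t)) \<or>
          ((\<nexists>st. refine_step Sig L P (Tset Sig P) (d t) st) \<and> d (Suc t) = d t))"

abbreviation id_i :: "'a id_cfg \<Rightarrow> nat" where "id_i st \<equiv> fst st"
abbreviation id_v :: "'a id_cfg \<Rightarrow> nat \<Rightarrow> 'a list" where "id_v st \<equiv> fst (snd st)"

datatype 'a ids_cfg = Cfg (ck: nat) (ci: nat) (cv: "nat \<Rightarrow> 'a list") (cE: "'a list \<Rightarrow> 'a list set")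

definition Pk :: "'a list list \<Rightarrow> nat \<Rightarrow> 'a list set" where
  "Pk S k = insert [] (set (take k S))"

definition Tk :: "'a set \<Rightarrow> 'a list list \<Rightarrow> nat \<Rightarrow> 'a list set" where
  "Tk Sig S k = Tset Sig (Pk S k)"

definition ids_step :: "'a set \<Rightarrow> 'a list set \<Rightarrow> 'a list list \<Rightarrow> 'a ids_cfg \<Rightarrow> 'a ids_cfg \<Rightarrow> bool" where
  "ids_step Sig L S c c' \<longleftrightarrow>
     \<comment> \<open>an iteration of the k-th partition refinement\<close>
     (ck c' = ck c \<and>
      refine_step Sig L (Pk S (ck c)) (Tk Sig S (ck c)) (ci c, cv c, cE c) (ci c', cv c', cE c'))
   \<or> \<comment> \<open>the k-th refinement has terminated: process the next string of S\<close>
     (\<not> refine_enabled Sig (Pk S (ck c)) (cE c) \<and> ck c < length S \<and>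
      c' = Cfg (Suc (ck c)) (ci c) (cv c)
             (\<lambda>be. if be \<in> Tk Sig S (Suc (ck c)) - Tk Sig S (ck c)
                   then {cv c j | j. j \<le> ci c \<and> be @ cv c j \<in> L}
                   else cE c be))"

definition ids_init :: "'a set \<Rightarrow> 'a list set \<Rightarrow> 'a list list \<Rightarrow> 'a ids_cfg" where
  "ids_init Sig L S = Cfg 0 0 (\<lambda>_. []) (E_init L (Tk Sig S 0))"

text \<open>A maximal execution of prefix-free IDS on S (finite executions are extended
  by stuttering at the final configuration).\<close>
definition ids_run :: "'a set \<Rightarrow> 'a list set \<Rightarrow> 'a list list \<Rightarrow> (nat \<Rightarrow> 'a ids_cfg) \<Rightarrow> bool" where
  "ids_run Sig L S c \<longleftrightarrow>
     c 0 = ids_init Sig L S \<and>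
     (\<forall>t. ids_step Sig L S (c t) (c (Suc t)) \<or>
          ((\<nexists>c'. ids_step Sig L S (c t) c') \<and> c (Suc t) = c t))"

text \<open>K(n) = m: m is the least value of k while i has value n (and i reaches n).\<close>
definition Kis :: "(nat \<Rightarrow> 'a ids_cfg) \<Rightarrow> nat \<Rightarrow> nat \<Rightarrow> bool" where
  "Kis c n m \<longleftrightarrow> (\<exists>t. ci (c t) = n \<and> ck (c t) = m) \<and> (\<forall>t. ci (c t) = n \<longrightarrow> m \<le> ck (c t))"

end

theory Submission
  imports Defs
begin

text \<open>Along any run of prefix-free IDS the sets E_i are exactly the observation table
  E_i(x) = {v_j | j \<le> i, x v_j \<in> L} on the current T_k, and the v_j are pairwise distinct.
  A refinement step picks a suffix b\<gamma> on which two rows of P'_k that agreed so far disagree;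
  such a suffix is new, and it splits a class of equal rows, so the number of distinct rows
  of P'_k grows and each refinement terminates. Since all E_i are determined by the table, each
  refinement step of IDS, read on the final T = T_l, is a legal step of ID with the same
  witnesses, and when IDS stops no step of ID is enabled either; this ID run has the same v_j.\<close>

section \<open>Observation tables\<close>

definition table :: "'a list set \<Rightarrow> nat \<Rightarrow> (nat \<Rightarrow> 'a list) \<Rightarrow> 'a list \<Rightarrow> 'a list set" where
  "table L i v x = {v j | j. j \<le> i \<and> x @ v j \<in> L}"

definition tabulates ::
  "'a list set \<Rightarrow> 'a list set \<Rightarrow> nat \<Rightarrow> (nat \<Rightarrow> 'a list) \<Rightarrow> ('a list \<Rightarrow> 'a list set) \<Rightarrow> bool" where
  "tabulates L T i v E \<longleftrightarrow> (\<forall>x\<in>T. E x = table L i v x)"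

definition table_on ::
  "'a list set \<Rightarrow> 'a list set \<Rightarrow> nat \<Rightarrow> (nat \<Rightarrow> 'a list) \<Rightarrow> 'a list \<Rightarrow> 'a list set" where
  "table_on L T i v x = (if x \<in> T then table L i v x else {})"

definition E_add ::
  "'a list set \<Rightarrow> 'a list set \<Rightarrow> ('a list \<Rightarrow> 'a list set) \<Rightarrow> 'a list \<Rightarrow> 'a list \<Rightarrow> 'a list set" where
  "E_add L T E w = (\<lambda>x. if x \<in> T \<and> x @ w \<in> L then E x \<union> {w} else E x)"

lemma mem_table: "u \<in> table L i v x \<longleftrightarrow> (\<exists>j\<le>i. u = v j \<and> x @ v j \<in> L)"
  by (auto simp: table_def)

lemma ex_le_Suc: "(\<exists>j\<le>Suc i. P j) \<longleftrightarrow> (\<exists>j\<le>i. P j) \<or> P (Suc i)"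
  by (auto simp: le_Suc_eq)

lemma table_fun_upd:
  "table L (Suc i) (v(Suc i := w)) x = (if x @ w \<in> L then insert w (table L i v x) else table L i v x)"
proof -
  have "(\<exists>j\<le>i. u = (v(Suc i := w)) j \<and> x @ (v(Suc i := w)) j \<in> L) \<longleftrightarrow> u \<in> table L i v x" for u
    unfolding mem_table by (intro ex_cong1) auto
  then have "u \<in> table L (Suc i) (v(Suc i := w)) x \<longleftrightarrow> u \<in> table L i v x \<or> (u = w \<and> x @ w \<in> L)" for u
    unfolding mem_table[of u _ "Suc i"] ex_le_Suc by simp
  then show ?thesis by auto
qed

lemma table_on_E_init: "table_on L T 0 (\<lambda>_. []) = E_init L T"
  by (simp add: fun_eq_iff table_on_def table_def E_init_def)

lemma table_on_fun_upd: "table_on L T (Suc i) (v(Suc i := w)) = E_add L T (table_on L T i v) w"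
  by (simp add: fun_eq_iff table_on_def E_add_def table_fun_upd)

lemma tabulates_E_add:
  "tabulates L T i v E \<Longrightarrow> tabulates L T (Suc i) (v(Suc i := w)) (E_add L T E w)"
  by (simp add: tabulates_def E_add_def table_fun_upd)

lemma inj_on_fun_upd_atMost_Suc:
  "inj_on v {..i} \<Longrightarrow> w \<notin> v ` {..i} \<Longrightarrow> inj_on (v(Suc i := w)) {..Suc i}"
proof -
  assume "inj_on v {..i}" and w: "w \<notin> v ` {..i}"
  then have "inj_on (v(Suc i := w)) {..i}" by (simp add: inj_on_def)
  moreover have "(v(Suc i := w)) ` {..i} = v ` {..i}" by auto
  ultimately show ?thesis using w by (simp add: atMost_Suc)
qed

section \<open>The refinement procedure\<close>

lemma Some_in_Pd [simp]: "Some x \<in> Pd P \<longleftrightarrow> x \<in> P"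
  by (auto simp: Pd_def)

lemma Eo_cong_Tset:
  assumes "\<forall>x\<in>Tset Sig P. E1 x = E2 x" and "z \<in> Pd P" and "b \<in> Sig"
  shows "Eo E1 z = Eo E2 z" "Eo E1 (fext z b) = Eo E2 (fext z b)"
  using assms by (auto simp: Pd_def Tset_def)

lemma refine_enabled_cong:
  assumes "\<forall>x\<in>Tset Sig P. E1 x = E2 x"
  shows "refine_enabled Sig P E1 \<longleftrightarrow> refine_enabled Sig P E2"
  using Eo_cong_Tset[OF assms] unfolding refine_enabled_def by metis

lemma refine_enabled_iff_step:
  "refine_enabled Sig P E \<longleftrightarrow> (\<exists>st'. refine_step Sig L P T (i, v, E) st')"
  unfolding refine_enabled_def refine_step_def symdiff_def by blast

lemma refine_step_separates:
  assumes tab: "tabulates L (Tset Sig P) i v E"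
    and al: "al \<in> Pd P" and be: "be \<in> Pd P" and b: "b \<in> Sig" and eq: "Eo E al = Eo E be"
    and ga_al: "ga \<in> Eo E (fext al b)" and ga_be: "ga \<notin> Eo E (fext be b)"
  shows "b # ga \<notin> v ` {..i}"
    and "Eo (E_add L (Tset Sig P) E (b # ga)) al \<noteq> Eo (E_add L (Tset Sig P) E (b # ga)) be"
proof -
  let ?T = "Tset Sig P" and ?w = "b # ga"
  have in_T: "x \<in> ?T" "x @ [b] \<in> ?T" if "x \<in> P" for x
    using that b by (auto simp: Tset_def)
  obtain a where a: "al = Some a" "a \<in> P"
    using al ga_al by (cases al) auto
  have a_w: "a @ ?w \<in> L"
    using ga_al tab in_T(2)[OF a(2)] a(1) by (auto simp: tabulates_def mem_table)
  have be_w: "\<beta> @ ?w \<notin> L" if "be = Some \<beta>" for \<beta>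
  proof
    assume "\<beta> @ ?w \<in> L"
    have "\<beta> \<in> P" using be that by simp
    then have "ga \<notin> table L i v (\<beta> @ [b])"
      using ga_be that tab in_T(2) by (auto simp: tabulates_def)
    moreover have "ga \<in> table L i v (\<beta> @ [b])"
      using ga_al tab in_T(2)[OF a(2)] a(1) \<open>\<beta> @ ?w \<in> L\<close> by (auto simp: tabulates_def mem_table)
    ultimately show False by contradiction
  qed
  show fresh: "?w \<notin> v ` {..i}"
  proof
    assume "?w \<in> v ` {..i}"
    then have "?w \<in> Eo E al"
      using a a_w tab in_T(1) by (auto simp: tabulates_def mem_table)
    then obtain \<beta> where "be = Some \<beta>" "?w \<in> E \<beta>" "\<beta> \<in> P"
      using eq be by (cases be) auto
    then show False
      using be_w tab in_T(1) by (auto simp: tabulates_def mem_table)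
  qed
  have "?w \<in> Eo (E_add L ?T E ?w) al"
    using a a_w in_T(1) by (simp add: E_add_def)
  moreover have "?w \<notin> Eo (E_add L ?T E ?w) be"
  proof (cases be)
    case (Some \<beta>)
    then have "\<beta> \<in> P" using be by simp
    then show ?thesis
      using Some be_w fresh tab in_T(1) by (auto simp: E_add_def tabulates_def mem_table)
  qed simp
  ultimately show "Eo (E_add L ?T E ?w) al \<noteq> Eo (E_add L ?T E ?w) be" by blast
qed

lemma refine_step_enabled: "refine_step Sig L P T (i, v, E) st' \<Longrightarrow> refine_enabled Sig P E"
  using refine_enabled_iff_step by blast

lemma refine_stepE:
  assumes "refine_step Sig L P T (i, v, E) st'"
  obtains al be b ga where "al \<in> Pd P" "be \<in> Pd P" "b \<in> Sig" "Eo E al = Eo E be"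
    "ga \<in> Eo E (fext al b)" "ga \<notin> Eo E (fext be b)"
    "st' = (Suc i, v(Suc i := b # ga), E_add L T E (b # ga))"
proof -
  obtain al be b ga where step: "al \<in> Pd P" "be \<in> Pd P" "b \<in> Sig" "Eo E al = Eo E be"
    "st' = (Suc i, v(Suc i := b # ga), E_add L T E (b # ga))"
    and ga: "ga \<in> symdiff (Eo E (fext al b)) (Eo E (fext be b))"
    using assms unfolding refine_step_def prod.case E_add_def[symmetric] by blast
  show thesis
  proof (cases "ga \<in> Eo E (fext al b)")
    case True
    with step ga show thesis by (intro that[of al be b ga]) (simp_all add: symdiff_def)
  next
    case False
    with ga have "ga \<in> Eo E (fext be b)" by (simp add: symdiff_def)
    with step False show thesis by (intro that[of be al b ga]) simp_all
  qed
qed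

lemma refine_step_tabulates:
  assumes tab: "tabulates L (Tset Sig P) i v E" and inj: "inj_on v {..i}"
    and step: "refine_step Sig L P (Tset Sig P) (i, v, E) (i', v', E')"
  shows "tabulates L (Tset Sig P) i' v' E'" "inj_on v' {..i'}" "i' = Suc i" "\<exists>w. v' = v(Suc i := w)"
proof -
  obtain al be b ga where sep: "al \<in> Pd P" "be \<in> Pd P" "b \<in> Sig" "Eo E al = Eo E be"
    "ga \<in> Eo E (fext al b)" "ga \<notin> Eo E (fext be b)"
    and res: "(i', v', E') = (Suc i, v(Suc i := b # ga), E_add L (Tset Sig P) E (b # ga))"
    using step by (rule refine_stepE)
  have "b # ga \<notin> v ` {..i}" using refine_step_separates(1)[OF tab sep] .
  with res tab inj show "tabulates L (Tset Sig P) i' v' E'" "inj_on v' {..i'}" "i' = Suc i" "\<exists>w. v' = v(Suc i := w)"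
    by (simp_all add: tabulates_E_add inj_on_fun_upd_atMost_Suc) blast
qed

lemma refine_step_classes_grow:
  assumes "finite P" and tab: "tabulates L (Tset Sig P) i v E"
    and step: "refine_step Sig L P (Tset Sig P) (i, v, E) (i', v', E')"
  shows "card (Eo E ` Pd P) < card (Eo E' ` Pd P)"
proof -
  obtain al be b ga where sep: "al \<in> Pd P" "be \<in> Pd P" "b \<in> Sig" "Eo E al = Eo E be"
    "ga \<in> Eo E (fext al b)" "ga \<notin> Eo E (fext be b)"
    and E': "E' = E_add L (Tset Sig P) E (b # ga)"
    using step by (rule refine_stepE) simp
  txt \<open>Deleting the new suffix from the new rows gives back the old rows; as two rows that
    agreed before now differ, this map is not injective on the new rows.\<close>
  define f where "f X = X - {b # ga}" for X :: "'a list set"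
  have fresh: "b # ga \<notin> v ` {..i}" using refine_step_separates(1)[OF tab sep] .
  have forget: "Eo E z = f (Eo E' z)" if "z \<in> Pd P" for z
  proof (cases z)
    case (Some x)
    with that have "x \<in> Tset Sig P" by (simp add: Tset_def)
    with fresh tab have "b # ga \<notin> E x" by (auto simp: tabulates_def mem_table)
    then show ?thesis using Some E' by (auto simp: f_def E_add_def)
  qed (simp add: f_def)
  have "\<not> inj_on f (Eo E' ` Pd P)"
    using refine_step_separates(2)[OF tab sep] sep(1,2,4) forget E'
    unfolding inj_on_def by (metis imageI)
  moreover have "finite (Eo E' ` Pd P)" using \<open>finite P\<close> by (simp add: Pd_def)
  ultimately have "card (f ` Eo E' ` Pd P) < card (Eo E' ` Pd P)"
    using card_image_le inj_on_iff_eq_card le_neq_implies_less by metis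
  moreover have "Eo E ` Pd P = f ` Eo E' ` Pd P"
    using forget by (auto simp: image_image)
  ultimately show ?thesis by simp
qed

lemma refine_step_lift:
  assumes "P \<subseteq> P'" and tab: "tabulates L (Tset Sig P) i v E"
    and step: "refine_step Sig L P (Tset Sig P) (i, v, E) (i', v', E')"
  shows "refine_step Sig L P' (Tset Sig P')
           (i, v, table_on L (Tset Sig P') i v) (i', v', table_on L (Tset Sig P') i' v')"
proof -
  obtain al be b ga where sep: "al \<in> Pd P" "be \<in> Pd P" "b \<in> Sig" "Eo E al = Eo E be"
    "ga \<in> Eo E (fext al b)" "ga \<notin> Eo E (fext be b)"
    and res: "(i', v') = (Suc i, v(Suc i := b # ga))"
    using step by (rule refine_stepE) simp
  let ?E = "table_on L (Tset Sig P') i v"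
  have "Tset Sig P \<subseteq> Tset Sig P'" using \<open>P \<subseteq> P'\<close> by (auto simp: Tset_def)
  with tab have "\<forall>x\<in>Tset Sig P. E x = ?E x"
    by (auto simp: tabulates_def table_on_def)
  note agree = Eo_cong_Tset[OF this _ sep(3)]
  have "al \<in> Pd P'" "be \<in> Pd P'" using sep(1,2) \<open>P \<subseteq> P'\<close> by (auto simp: Pd_def)
  moreover have "Eo ?E al = Eo ?E be" "Eo ?E (fext al b) \<noteq> Eo ?E (fext be b)"
    and "ga \<in> symdiff (Eo ?E (fext al b)) (Eo ?E (fext be b))"
    using sep agree by (auto simp: symdiff_def)
  moreover have "(i', v', table_on L (Tset Sig P') i' v') =
      (Suc i, v(Suc i := b # ga), E_add L (Tset Sig P') ?E (b # ga))"
    using res table_on_fun_upd by simp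
  ultimately show ?thesis
    using sep(3) unfolding refine_step_def prod.case E_add_def by blast
qed

section \<open>Runs of prefix-free IDS\<close>

text \<open>The entries v_j with j = 0 or j > i keep their initial value [], so v is determined by i.\<close>
definition ids_inv :: "'a set \<Rightarrow> 'a list set \<Rightarrow> 'a list list \<Rightarrow> 'a ids_cfg \<Rightarrow> bool" where
  "ids_inv Sig L S cf \<longleftrightarrow> tabulates L (Tk Sig S (ck cf)) (ci cf) (cv cf) (cE cf) \<and>
     inj_on (cv cf) {..ci cf} \<and> (\<forall>j. j = 0 \<or> ci cf < j \<longrightarrow> cv cf j = [])"

lemma ids_step_cases:
  assumes "ids_step Sig L S cf cf'"
  obtains (refine) "ck cf' = ck cf"
    "refine_step Sig L (Pk S (ck cf)) (Tk Sig S (ck cf)) (ci cf, cv cf, cE cf) (ci cf', cv cf', cE cf')"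
  | (advance) "\<not> refine_enabled Sig (Pk S (ck cf)) (cE cf)" "ck cf < length S"
    "ck cf' = Suc (ck cf)" "ci cf' = ci cf" "cv cf' = cv cf"
    "\<And>x. cE cf' x = (if x \<in> Tk Sig S (Suc (ck cf)) - Tk Sig S (ck cf)
                      then table L (ci cf) (cv cf) x else cE cf x)"
  using assms unfolding ids_step_def table_def by auto

lemma ids_inv_step:
  assumes inv: "ids_inv Sig L S cf" and step: "ids_step Sig L S cf cf'"
  shows "ids_inv Sig L S cf'"
  using step
proof (cases rule: ids_step_cases)
  case refine
  have "tabulates L (Tset Sig (Pk S (ck cf))) (ci cf) (cv cf) (cE cf)" "inj_on (cv cf) {..ci cf}"
    using inv by (simp_all add: ids_inv_def Tk_def)
  note new = refine_step_tabulates[OF this refine(2)[unfolded Tk_def]]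
  from new(4) obtain w where "cv cf' = (cv cf)(Suc (ci cf) := w)" ..
  with new(1-3) refine(1) inv show ?thesis by (auto simp: ids_inv_def Tk_def)
next
  case advance
  with inv show ?thesis by (auto simp: ids_inv_def tabulates_def)
qed

definition id_view :: "'a list set \<Rightarrow> 'a list set \<Rightarrow> 'a ids_cfg \<Rightarrow> 'a id_cfg" where
  "id_view L T cf = (ci cf, cv cf, table_on L T (ci cf) (cv cf))"

context
  fixes Sig :: "'a set" and L :: "'a list set" and S :: "'a list list" and c :: "nat \<Rightarrow> 'a ids_cfg"
  assumes run: "ids_run Sig L S c"
begin

lemma ids_run_start: "c 0 = ids_init Sig L S"
  using run by (simp add: ids_run_def)

lemma ids_run_takes_step: "ids_step Sig L S (c t) cf' \<Longrightarrow> ids_step Sig L S (c t) (c (Suc t))"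
  using run unfolding ids_run_def by blast

lemma ids_run_stutters: "\<not> ids_step Sig L S (c t) (c (Suc t)) \<Longrightarrow> c (Suc t) = c t"
  using run unfolding ids_run_def by blast

lemma ids_inv_run: "ids_inv Sig L S (c t)"
proof (induction t)
  case 0
  have "tabulates L (Tk Sig S 0) 0 (\<lambda>_. []) (E_init L (Tk Sig S 0))"
    by (auto simp: tabulates_def E_init_def table_def)
  then show ?case by (simp add: ids_run_start ids_init_def ids_inv_def)
next
  case (Suc t)
  show ?case
  proof (cases "ids_step Sig L S (c t) (c (Suc t))")
    case True
    with Suc show ?thesis by (rule ids_inv_step)
  next
    case False
    with Suc show ?thesis by (simp add: ids_run_stutters[OF False])
  qed
qed

lemma ids_run_Suc_cases:
  "ci (c (Suc t)) = ci (c t) \<and> cv (c (Suc t)) = cv (c t) \<or>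
   ci (c (Suc t)) = Suc (ci (c t)) \<and> ck (c (Suc t)) = ck (c t) \<and>
   (\<exists>w. cv (c (Suc t)) = (cv (c t))(Suc (ci (c t)) := w)) \<and>
   refine_step Sig L (Pk S (ck (c t))) (Tk Sig S (ck (c t)))
     (ci (c t), cv (c t), cE (c t)) (ci (c (Suc t)), cv (c (Suc t)), cE (c (Suc t)))"
proof (cases "ids_step Sig L S (c t) (c (Suc t))")
  case True
  then show ?thesis
  proof (cases rule: ids_step_cases)
    case refine
    have "tabulates L (Tset Sig (Pk S (ck (c t)))) (ci (c t)) (cv (c t)) (cE (c t))"
      "inj_on (cv (c t)) {..ci (c t)}"
      using ids_inv_run[of t] by (simp_all add: ids_inv_def Tk_def)
    with refine show ?thesis
      using refine_step_tabulates(3,4)[OF _ _ refine(2)[unfolded Tk_def]] by simp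
  qed simp
next
  case False
  then show ?thesis by (simp add: ids_run_stutters[OF False])
qed

lemma ids_run_i_mono: "t1 \<le> t2 \<Longrightarrow> ci (c t1) \<le> ci (c t2)"
proof (rule lift_Suc_mono_le[of "\<lambda>t. ci (c t)"])
  show "ci (c t) \<le> ci (c (Suc t))" for t
    using ids_run_Suc_cases[of t] by auto
qed

lemma ids_run_v_stable_forward: "t1 \<le> t2 \<Longrightarrow> j \<le> ci (c t1) \<Longrightarrow> cv (c t2) j = cv (c t1) j"
proof (induction t2 rule: dec_induct)
  case (step t)
  then have "j \<le> ci (c t)" using ids_run_i_mono le_trans by blast
  then show ?case using step ids_run_Suc_cases[of t] by auto
qed simp

lemma ids_run_v_stable: "ci (c t1) \<le> ci (c t2) \<Longrightarrow> j \<le> ci (c t1) \<Longrightarrow> cv (c t1) j = cv (c t2) j"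
proof (cases "t1 \<le> t2")
  case False
  assume "ci (c t1) \<le> ci (c t2)" "j \<le> ci (c t1)"
  moreover have "ci (c t2) \<le> ci (c t1)" using False ids_run_i_mono by simp
  ultimately show ?thesis using ids_run_v_stable_forward[of t2 t1] False by simp
qed (simp add: ids_run_v_stable_forward)

lemma ids_run_v_eq:
  assumes "ci (c t1) = ci (c t2)"
  shows "cv (c t1) = cv (c t2)"
proof
  fix j
  show "cv (c t1) j = cv (c t2) j"
  proof (cases "j \<le> ci (c t1)")
    case True
    with assms show ?thesis by (simp add: ids_run_v_stable)
  next
    case False
    with assms ids_inv_run[of t1] ids_inv_run[of t2] show ?thesis
      by (simp add: ids_inv_def)
  qed
qed

lemma ids_run_refines_while_enabled:
  assumes "refine_enabled Sig (Pk S (ck (c t))) (cE (c t))"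
  shows "ck (c (Suc t)) = ck (c t)"
    and "refine_step Sig L (Pk S (ck (c t))) (Tk Sig S (ck (c t)))
           (ci (c t), cv (c t), cE (c t)) (ci (c (Suc t)), cv (c (Suc t)), cE (c (Suc t)))"
proof -
  obtain i' v' E' where "refine_step Sig L (Pk S (ck (c t))) (Tk Sig S (ck (c t)))
      (ci (c t), cv (c t), cE (c t)) (i', v', E')"
    using assms refine_enabled_iff_step by (metis prod_cases3)
  then have "ids_step Sig L S (c t) (Cfg (ck (c t)) i' v' E')"
    by (simp add: ids_step_def)
  then have "ids_step Sig L S (c t) (c (Suc t))" by (rule ids_run_takes_step)
  then show "ck (c (Suc t)) = ck (c t)"
    and "refine_step Sig L (Pk S (ck (c t))) (Tk Sig S (ck (c t)))
           (ci (c t), cv (c t), cE (c t)) (ci (c (Suc t)), cv (c (Suc t)), cE (c (Suc t)))"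
    using assms by (cases rule: ids_step_cases; simp)+
qed

lemma ids_run_refinement_terminates:
  assumes "ck (c t) = m"
  shows "\<exists>t'. ck (c t') = m \<and> \<not> refine_enabled Sig (Pk S m) (cE (c t'))"
proof -
  let ?classes = "\<lambda>t. card (Eo (cE (c t)) ` Pd (Pk S m))"
  have bounded: "?classes t \<le> card (Pd (Pk S m))" for t
    by (rule card_image_le) (simp add: Pd_def Pk_def)
  show ?thesis
    using assms
  proof (induction "card (Pd (Pk S m)) - ?classes t" arbitrary: t rule: less_induct)
    case less
    show ?case
    proof (cases "refine_enabled Sig (Pk S m) (cE (c t))")
      case True
      note step = ids_run_refines_while_enabled[of t, unfolded less.prems, OF True]
      have "tabulates L (Tset Sig (Pk S m)) (ci (c t)) (cv (c t)) (cE (c t))"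
        using ids_inv_run[of t] less.prems by (simp add: ids_inv_def Tk_def)
      from refine_step_classes_grow[OF _ this step(2)[unfolded Tk_def]]
      have "?classes t < ?classes (Suc t)" by (simp add: Pk_def)
      with bounded[of "Suc t"] step(1) less.prems show ?thesis
        by (intro less.hyps) auto
    qed (use less.prems in blast)
  qed
qed

lemma ids_run_reaches_level:
  "m \<le> length S \<Longrightarrow> \<exists>t. ck (c t) = m \<and> \<not> refine_enabled Sig (Pk S m) (cE (c t))"
proof (induction m)
  case 0
  then show ?case
    using ids_run_refinement_terminates[of 0] by (simp add: ids_run_start ids_init_def)
next
  case (Suc m)
  then obtain t where t: "ck (c t) = m" "\<not> refine_enabled Sig (Pk S m) (cE (c t))"
    by auto
  have "ids_step Sig L S (c t) (Cfg (Suc m) (ci (c t)) (cv (c t))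
          (\<lambda>be. if be \<in> Tk Sig S (Suc m) - Tk Sig S m
                then {cv (c t) j | j. j \<le> ci (c t) \<and> be @ cv (c t) j \<in> L} else cE (c t) be))"
    using t Suc.prems by (simp add: ids_step_def)
  then have "ids_step Sig L S (c t) (c (Suc t))" by (rule ids_run_takes_step)
  then have "ck (c (Suc t)) = Suc m"
    by (cases rule: ids_step_cases) (use t in \<open>auto dest!: refine_step_enabled\<close>)
  then show ?case by (rule ids_run_refinement_terminates)
qed

lemma ids_run_i_passes: "n < ci (c t) \<Longrightarrow> \<exists>s. ci (c s) = n \<and> ci (c (Suc s)) = Suc n"
proof (induction t)
  case (Suc t)
  then show ?case using ids_run_Suc_cases[of t] less_Suc_eq by auto
qed (simp add: ids_run_start ids_init_def)

lemma ids_run_i_hits: "n \<le> ci (c t) \<Longrightarrow> \<exists>s. ci (c s) = n"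
  using ids_run_i_passes le_neq_implies_less by blast

lemma ids_run_halts:
  obtains tf where "ck (c tf) = length S" "\<not> refine_enabled Sig (Pk S (length S)) (cE (c tf))"
    "\<And>t. ci (c t) \<le> ci (c tf)"
proof -
  obtain tf where tf: "ck (c tf) = length S" "\<not> refine_enabled Sig (Pk S (length S)) (cE (c tf))"
    using ids_run_reaches_level by blast
  have stuck: "\<not> ids_step Sig L S (c tf) cf'" for cf'
  proof
    assume "ids_step Sig L S (c tf) cf'"
    then show False
      by (cases rule: ids_step_cases) (use tf in \<open>auto dest!: refine_step_enabled\<close>)
  qed
  have "c (tf + j) = c tf" for j
  proof (induction j)
    case (Suc j)
    then show ?case using stuck ids_run_stutters[of "tf + j"] by simp
  qed simp
  then have "ci (c t) \<le> ci (c tf)" for t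
    using ids_run_i_mono[of t tf] by (metis le_add_diff_inverse nat_le_linear)
  then show thesis by (rule that[OF tf])
qed

section \<open>Prefix-free IDS versus ID\<close>

lemma ids_run_id_step:
  assumes "ci (c (Suc s)) = Suc (ci (c s))"
  shows "refine_step Sig L (insert [] (set S)) (Tset Sig (insert [] (set S)))
    (id_view L (Tset Sig (insert [] (set S))) (c s)) (id_view L (Tset Sig (insert [] (set S))) (c (Suc s)))"
proof -
  let ?k = "ck (c s)"
  have "Pk S ?k \<subseteq> insert [] (set S)"
    by (auto simp: Pk_def dest: in_set_takeD)
  moreover have "tabulates L (Tset Sig (Pk S ?k)) (ci (c s)) (cv (c s)) (cE (c s))"
    using ids_inv_run[of s] by (simp add: ids_inv_def Tk_def)
  moreover have "refine_step Sig L (Pk S ?k) (Tset Sig (Pk S ?k))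
      (ci (c s), cv (c s), cE (c s)) (ci (c (Suc s)), cv (c (Suc s)), cE (c (Suc s)))"
    using ids_run_Suc_cases[of s] assms by (auto simp: Tk_def)
  ultimately show ?thesis
    unfolding id_view_def by (rule refine_step_lift)
qed

lemma ids_run_simulated_by_id_run:
  obtains d where "id_run Sig L (insert [] (set S)) d"
    "\<And>t'. \<exists>t. d t' = id_view L (Tset Sig (insert [] (set S))) (c t)"
    "\<And>t. \<exists>t'. id_i (d t') = ci (c t)"
proof -
  let ?P = "insert [] (set S)"
  let ?view = "id_view L (Tset Sig ?P)"
  obtain tf where tf: "ck (c tf) = length S" "\<not> refine_enabled Sig (Pk S (length S)) (cE (c tf))"
    and bound: "\<And>t. ci (c t) \<le> ci (c tf)"
    using ids_run_halts by blast
  define N where "N = ci (c tf)"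
  txt \<open>ID makes one step for every increment of i in the IDS run and stutters once i has
    reached its final value N.\<close>
  define d where "d t' = ?view (c (SOME t. ci (c t) = min t' N))" for t'
  have d_eq: "d t' = ?view (c t)" if "ci (c t) = min t' N" for t t'
  proof -
    have "ci (c (SOME t. ci (c t) = min t' N)) = min t' N"
      using that by (rule someI)
    with that have "ci (c (SOME t. ci (c t) = min t' N)) = ci (c t)" by simp
    with ids_run_v_eq[OF this] show ?thesis
      unfolding d_def id_view_def by simp
  qed
  have d_view: "\<exists>t. d t' = ?view (c t)" for t'
    using ids_run_i_hits[of "min t' N" tf] d_eq unfolding N_def by fastforce
  have "id_run Sig L ?P d"
    unfolding id_run_def
  proof (intro conjI allI)
    have "d 0 = ?view (c 0)"
      by (rule d_eq) (simp add: ids_run_start ids_init_def)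
    then show "d 0 = (0, \<lambda>_. [], E_init L (Tset Sig ?P))"
      by (simp add: ids_run_start ids_init_def id_view_def table_on_E_init)
  next
    fix t'
    show "refine_step Sig L ?P (Tset Sig ?P) (d t') (d (Suc t')) \<or>
      (\<nexists>st. refine_step Sig L ?P (Tset Sig ?P) (d t') st) \<and> d (Suc t') = d t'"
    proof (cases "t' < N")
      case True
      then obtain s where "ci (c s) = t'" "ci (c (Suc s)) = Suc t'"
        using ids_run_i_passes unfolding N_def by blast
      with True have "d t' = ?view (c s)" "d (Suc t') = ?view (c (Suc s))"
        by (simp_all add: d_eq)
      with ids_run_id_step \<open>ci (c s) = t'\<close> \<open>ci (c (Suc s)) = Suc t'\<close> show ?thesis by simp
    next
      case False
      then have views: "d t' = ?view (c tf)" "d (Suc t') = ?view (c tf)"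
        by (simp_all add: d_eq N_def)
      have "Pk S (length S) = ?P" by (simp add: Pk_def)
      with ids_inv_run[of tf] tf have "\<not> refine_enabled Sig ?P (table_on L (Tset Sig ?P) N (cv (c tf)))"
        using refine_enabled_cong[of Sig ?P "cE (c tf)"]
        by (auto simp: ids_inv_def tabulates_def table_on_def Tk_def N_def)
      with views show ?thesis
        using refine_enabled_iff_step unfolding id_view_def N_def by metis
    qed
  qed
  moreover have "\<exists>t'. id_i (d t') = ci (c t)" for t
  proof
    show "id_i (d (ci (c t))) = ci (c t)"
      using d_eq[of t "ci (c t)"] bound[of t] unfolding N_def id_view_def by simp
  qed
  ultimately show thesis
    using that d_view by blast
qed

end

theorem mainTheorem3:
  fixes Sig :: "'a set" and Q :: "'s set" and delta :: "'s \<Rightarrow> 'a \<Rightarrow> 's"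
    and q0 :: 's and F :: "'s set" and S :: "'a list list"
    and c :: "nat \<Rightarrow> 'a ids_cfg"
  assumes "dfa Sig Q delta q0 F"
    and "S \<noteq> []"
    and "\<forall>s\<in>set S. set s \<subseteq> Sig"
    and "ids_run Sig (dfa_lang Sig delta q0 F) S c"
  shows "\<exists>d. id_run Sig (dfa_lang Sig delta q0 F) (insert [] (set S)) d \<and>
    (\<forall>m.
      (\<forall>n. Kis c n m \<longrightarrow>
         ((\<exists>t'. n \<le> id_i (d t')) \<and>
          (\<forall>t t'. ci (c t) = n \<longrightarrow> n \<le> id_i (d t') \<longrightarrow>
                  (\<forall>j\<le>n. cv (c t) j = id_v (d t') j))) \<and>
         (\<forall>t. ci (c t) = n \<longrightarrow> (\<forall>j<n. cv (c t) n \<noteq> cv (c t) j)) \<and>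
         (\<forall>t. ci (c t) = n \<and> ck (c t) = m \<longrightarrow>
            (\<forall>al\<in>Tk Sig S m. cE (c t) al =
               {cv (c t) j | j. j \<le> n \<and> al @ cv (c t) j \<in> dfa_lang Sig delta q0 F}))) \<and>
      (0 < m \<longrightarrow>
        (\<forall>p. Kis c p (m - 1) \<and> (\<forall>q. Kis c q (m - 1) \<longrightarrow> q \<le> p) \<longrightarrow>
          (\<forall>t. ci (c t) = p \<and> ck (c t) = m \<longrightarrow>
            (\<forall>al\<in>Tk Sig S m. cE (c t) al =
               {cv (c t) j | j. j \<le> p \<and> al @ cv (c t) j \<in> dfa_lang Sig delta q0 F})))) \<and>
      (m \<le> length S \<longrightarrow>
        (\<exists>t. ck (c t) = m \<and> \<not> refine_enabled Sig (Pk S m) (cE (c t)))))"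
proof -
  let ?L = "dfa_lang Sig delta q0 F"
  note run = assms(4)
  obtain d where d: "id_run Sig ?L (insert [] (set S)) d"
    and view: "\<And>t'. \<exists>t. d t' = id_view ?L (Tset Sig (insert [] (set S))) (c t)"
    and hits: "\<And>t. \<exists>t'. id_i (d t') = ci (c t)"
    using ids_run_simulated_by_id_run[OF run] by blast
  have v_agree: "cv (c t) j = id_v (d t') j" if "ci (c t) \<le> id_i (d t')" "j \<le> ci (c t)" for t t' j
    using view[of t'] ids_run_v_stable[OF run] that unfolding id_view_def by force
  have fresh: "cv (c t) (ci (c t)) \<noteq> cv (c t) j" if "j < ci (c t)" for t j
    using ids_inv_run[OF run, of t] that unfolding ids_inv_def inj_on_def by fastforce
  have exact: "cE (c t) al = {cv (c t) j | j. j \<le> ci (c t) \<and> al @ cv (c t) j \<in> ?L}"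
    if "al \<in> Tk Sig S (ck (c t))" for t al
    using ids_inv_run[OF run, of t] that by (simp add: ids_inv_def tabulates_def table_def)
  show ?thesis
  proof (intro exI[of _ d] conjI allI impI ballI d)
    show "\<exists>t'. n \<le> id_i (d t')" if "Kis c n m" for n m
      using that hits unfolding Kis_def by (metis order_refl)
  qed (use v_agree fresh exact ids_run_reaches_level[OF run] in auto)
qed

end
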